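(* Let $u$ be a $C^2$ solution of $$ r\left(1+4u'^2+3u'^4\right) - 2u'\left(1+u'^2\right) + 2r\,u''\left(3u'^2-1\right)=0 \qquad (\ast)$$ with initial conditions $u(0)=0$, $u'(0)=0$, extended to its maximal interval of existence as a solution of $(\ast)$ (equivalently of $u''=-\frac{1+4u'^2+3u'^4}{2(3u'^2-1)}+\frac{u'(1+u'^2)}{r(3u'^2-1)}$ for $r>0$). Then the maximal domain is a bounded interval $[0,r_M)$ with $0<r_M<\infty$, and $\lim_{r\to r_M^-}u'(r)=\frac{1}{\sqrt3}$.
   Context: The solution with $u(0)=u'(0)=0$ exists locally in $C^2$ near $r=0$ and satisfies $u''(0)=1/4$. The coefficient $3u'^2-1$ of $u''$ in $(\ast)$ vanishes exactly when $u'=\pm 1/\sqrt3$. *)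

theory Defs
  imports "HOL-Analysis.Analysis"
begin

definition dom0 :: "ereal \<Rightarrow> real set" where
  "dom0 R = {r. 0 \<le> r \<and> ereal r < R}"

text \<open>u is a C^2 solution on [0,R) of the equation (*), written in the explicit
  (non-degenerate) form, i.e. with 3u'^2 - 1 nonzero, with u(0)=0, u'(0)=0.
  Derivatives at 0 are one-sided (within the domain).\<close>
definition ode_sol :: "(real \<Rightarrow> real) \<Rightarrow> ereal \<Rightarrow> bool" where
  "ode_sol u R \<longleftrightarrow> 0 \<in> dom0 R \<and>
     (\<exists>u1 u2. (\<forall>r\<in>dom0 R. (u has_real_derivative u1 r) (at r within dom0 R)
                       \<and> (u1 has_real_derivative u2 r) (at r within dom0 R))
            \<and> continuous_on (dom0 R) u2
            \<and> u 0 = 0 \<and> u1 0 = 0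
            \<and> (\<forall>r\<in>dom0 R. 3 * (u1 r)\<^sup>2 - 1 \<noteq> 0)
            \<and> (\<forall>r\<in>dom0 R. r * (1 + 4 * (u1 r)\<^sup>2 + 3 * (u1 r)^4) - 2 * u1 r * (1 + (u1 r)\<^sup>2)
                             + 2 * r * u2 r * (3 * (u1 r)\<^sup>2 - 1) = 0))"

definition maximal_ode_sol :: "(real \<Rightarrow> real) \<Rightarrow> ereal \<Rightarrow> bool" where
  "maximal_ode_sol u R \<longleftrightarrow> ode_sol u R \<and>
     \<not> (\<exists>v R'. R < R' \<and> ode_sol v R' \<and> (\<forall>r\<in>dom0 R. v r = u r))"

end

theory Submission
  imports Defs
begin

(* Write p = u' and q = u''. The equation says q * 2r(1 - 3p^2) = (1 + p^2)(r(1 + 3p^2) - 2p).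
   Since p(0) = 0 and 3p^2 never equals 1, we have 3p^2 < 1 on the whole domain. Dividing by r
   and letting r -> 0 gives q(0) = 1/4, so the factor N = r(1 + 3p^2) - 2p is positive near 0;
   it stays positive, because at a first zero of N the equation forces q = 0 and then N' = 1 + 3p^2 > 0.
   Hence q > 0 and p increases. Since p < 1, the equation gives q >= 1/4 for r >= 4, which is
   incompatible with an unbounded domain; so the domain is [0, rho) with rho finite, and p has a
   limit L with 3L^2 <= 1 at rho. If 3L^2 < 1 the explicit equation is regular near (rho, L), and
   Picard-Lindeloef continues the solution beyond rho, contradicting maximality. So L = 1/sqrt 3. *)

section \<open>Elementary real analysis\<close>

lemma integral_eq_diff_if_has_real_derivative:
  fixes f f' :: "real \<Rightarrow> real"
  assumes "a \<le> b" "{a..b} \<subseteq> S"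
    and "\<And>x. x \<in> {a..b} \<Longrightarrow> (f has_real_derivative f' x) (at x within S)"
  shows "integral {a..b} f' = f b - f a"
proof -
  have "(f' has_integral (f b - f a)) {a..b}"
    using assms by (intro fundamental_theorem_of_calculus)
      (auto simp: has_real_derivative_iff_has_vector_derivative intro: has_vector_derivative_within_subset)
  then show ?thesis by (rule integral_unique)
qed

lemma continuous_on_glue:
  fixes f g :: "real \<Rightarrow> real"
  assumes "a < c" "c \<le> b" "continuous_on {a..<c} f" "continuous_on {c..b} g"
    and lim: "(f \<longlongrightarrow> g c) (at_left c)"
  shows "continuous_on {a..b} (\<lambda>x. if x < c then f x else g x)"
proof -
  have "continuous (at x within {a..c}) (\<lambda>x. if x < c then f x else g x)" if x: "x \<in> {a..c}" for x
  proof (cases "x = c")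
    case True
    have "eventually (\<lambda>y. f y = (if y < c then f y else g y)) (at_left c)"
      by (simp add: eventually_at_filter)
    with lim have "((\<lambda>y. if y < c then f y else g y) \<longlongrightarrow> g c) (at_left c)"
      by (rule Lim_transform_eventually)
    then show ?thesis using True \<open>a < c\<close> by (simp add: continuous_within at_within_Icc_at_left)
  next
    case False
    then have "x < c" using x by auto
    have "at x within {a..c} = at x within {a..<c}"
      by (rule at_within_nhd[of x "{..<c}"]) (use \<open>x < c\<close> in auto)
    moreover have "continuous (at x within {a..<c}) f"
      using assms(3) x \<open>x < c\<close> by (simp add: continuous_on_eq_continuous_within)
    moreover have "eventually (\<lambda>y. f y = (if y < c then f y else g y)) (at x within {a..<c})"
      by (auto simp: eventually_at_filter)
    ultimately show ?thesis
      using \<open>x < c\<close> by (auto simp: continuous_within elim: Lim_transform_eventually)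
  qed
  then have "continuous_on {a..c} (\<lambda>x. if x < c then f x else g x)"
    by (simp add: continuous_on_eq_continuous_within)
  moreover have "continuous_on {c..b} (\<lambda>x. if x < c then f x else g x)"
    using assms(4) by (rule continuous_on_eq) auto
  ultimately have "continuous_on ({a..c} \<union> {c..b}) (\<lambda>x. if x < c then f x else g x)"
    by (intro continuous_on_closed_Un) auto
  moreover have "{a..c} \<union> {c..b} = {a..b}" using assms(1,2) by auto
  ultimately show ?thesis by simp
qed

lemma integral_glue:
  fixes f g k' :: "real \<Rightarrow> real"
  assumes "a < c" "c \<le> b"
    and f: "\<And>x. x \<in> {a..<c} \<Longrightarrow> (f has_real_derivative k' x) (at x within {a..<c})"
    and g: "\<And>x. x \<in> {c..b} \<Longrightarrow> (g has_real_derivative k' x) (at x within {c..b})"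
    and k'_cont: "continuous_on {a..b} k'" and f_lim: "(f \<longlongrightarrow> g c) (at_left c)"
    and "x \<in> {a..b}"
  shows "f a + integral {a..x} k' = (if x < c then f x else g x)"
proof -
  define K where "K x = f a + integral {a..x} k'" for x
  have K_f: "K x = f x" if "x \<in> {a..<c}" for x
  proof -
    have "integral {a..x} k' = f x - f a"
      using that by (intro integral_eq_diff_if_has_real_derivative[where S="{a..<c}"] f) auto
    then show ?thesis by (simp add: K_def)
  qed
  have K_cont: "continuous_on {a..b} K"
    unfolding K_def by (intro continuous_on_add continuous_on_const indefinite_integral_continuous_1
        integrable_continuous_real k'_cont)
  have "(K \<longlongrightarrow> K c) (at_left c)"
    using assms(1,2) by (intro continuous_on_Icc_at_leftD continuous_on_subset[OF K_cont]) auto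
  moreover have "eventually (\<lambda>x. K x = f x) (at_left c)"
    using eventually_at_left_real[OF \<open>a < c\<close>] by eventually_elim (simp add: K_f)
  ultimately have "(f \<longlongrightarrow> K c) (at_left c)" by (rule Lim_transform_eventually)
  then have K_c: "K c = g c" using f_lim by (rule tendsto_unique[OF trivial_limit_at_left_real])
  have K_g: "K x = g x" if "x \<in> {c..b}" for x
  proof -
    have "integral {a..x} k' = integral {a..c} k' + integral {c..x} k'"
      using that assms(1) by (intro Henstock_Kurzweil_Integration.integral_combine[symmetric]
          integrable_continuous_real continuous_on_subset[OF k'_cont]) auto
    moreover have "integral {c..x} k' = g x - g c"
      using that by (intro integral_eq_diff_if_has_real_derivative[where S="{c..b}"] g) auto
    ultimately show ?thesis using K_c by (simp add: K_def)
  qed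
  show ?thesis
    using K_f[of x] K_g[of x] \<open>x \<in> {a..b}\<close> by (cases "x < c") (auto simp: K_def)
qed

lemma continuously_differentiable_glue:
  fixes f f' g g' :: "real \<Rightarrow> real"
  assumes "a < c" "c \<le> b"
    and f': "\<And>x. x \<in> {a..<c} \<Longrightarrow> (f has_real_derivative f' x) (at x within {a..<c})"
    and "continuous_on {a..<c} f'"
    and g': "\<And>x. x \<in> {c..b} \<Longrightarrow> (g has_real_derivative g' x) (at x within {c..b})"
    and "continuous_on {c..b} g'"
    and f_lim: "(f \<longlongrightarrow> g c) (at_left c)" and f'_lim: "(f' \<longlongrightarrow> g' c) (at_left c)"
  defines "k \<equiv> \<lambda>x. if x < c then f x else g x" and "k' \<equiv> \<lambda>x. if x < c then f' x else g' x"
  shows "continuous_on {a..b} k'"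
    and "\<And>x. x \<in> {a..b} \<Longrightarrow> (k has_real_derivative k' x) (at x within {a..b})"
proof -
  show k'_cont: "continuous_on {a..b} k'"
    unfolding k'_def using assms(1-2,4,6) f'_lim by (rule continuous_on_glue)
  \<comment> \<open>The junction c needs no separate argument: k is an indefinite integral of the
    continuous function k'.\<close>
  have k_eq: "f a + integral {a..x} k' = k x" if "x \<in> {a..b}" for x
    unfolding k_def
  proof (rule integral_glue[where f=f and g=g, OF assms(1,2) _ _ k'_cont f_lim that])
    show "(f has_real_derivative k' y) (at y within {a..<c})" if "y \<in> {a..<c}" for y
      using f'[OF that] that by (simp add: k'_def)
    show "(g has_real_derivative k' y) (at y within {c..b})" if "y \<in> {c..b}" for y
      using g'[OF that] that \<open>a < c\<close> by (simp add: k'_def)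
  qed
  fix x assume x: "x \<in> {a..b}"
  have "((\<lambda>x. f a + integral {a..x} k') has_real_derivative 0 + k' x) (at x within {a..b})"
    by (intro DERIV_add DERIV_const integral_has_real_derivative k'_cont x)
  then show "(k has_real_derivative k' x) (at x within {a..b})"
    unfolding add_0_left by (rule has_field_derivative_transform_within[where d=1])
      (use x k_eq in auto)
qed

lemma pos_if_deriv_pos_at_zeros:
  fixes g :: "real \<Rightarrow> real"
  assumes "a \<le> b" and cont: "continuous_on {a..b} g" and "0 < g a"
    and zeros: "\<And>t. t \<in> {a<..b} \<Longrightarrow> g t = 0 \<Longrightarrow> \<exists>d>0. (g has_real_derivative d) (at t)"
  shows "0 < g b"
proof (rule ccontr)
  assume "\<not> 0 < g b"
  define Z where "Z = {t \<in> {a..b}. g t = 0}"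
  have "Z \<noteq> {}"
    using IVT2'[of g b 0 a] \<open>a \<le> b\<close> cont \<open>0 < g a\<close> \<open>\<not> 0 < g b\<close> by (auto simp: Z_def)
  moreover have "closed Z"
    unfolding Z_def by (rule continuous_closed_preimage_constant[OF cont]) simp
  moreover have "bdd_below Z" by (auto simp: Z_def intro: bdd_belowI[of _ a])
  ultimately have "Inf Z \<in> Z" and first: "\<And>z. z \<in> Z \<Longrightarrow> Inf Z \<le> z"
    by (auto intro: closed_contains_Inf cInf_lower)
  define t where "t = Inf Z"
  have t: "t \<in> {a<..b}" "g t = 0"
    using \<open>Inf Z \<in> Z\<close> \<open>0 < g a\<close> by (auto simp: Z_def t_def order.order_iff_strict)
  obtain d where "0 < d" "(g has_real_derivative d) (at t)" using zeros t by blast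
  then obtain e where e: "0 < e" "\<And>s. 0 < s \<Longrightarrow> s < e \<Longrightarrow> g (t - s) < g t"
    using DERIV_pos_inc_left by blast
  define s where "s = min (e / 2) ((t - a) / 2)"
  have "s \<le> e / 2" "s \<le> (t - a) / 2"
    unfolding s_def by (rule min.cobounded1, rule min.cobounded2)
  moreover have "0 < s" using e(1) t(1) by (simp add: s_def)
  ultimately have s: "0 < s" "s < e" "a \<le> t - s" "t - s < t" using e(1) t(1) by auto
  then have "g (t - s) < 0" using e(2) t(2) by fastforce
  then obtain z where "a \<le> z" "z \<le> t - s" "g z = 0"
    using IVT2'[of g "t - s" 0 a] s \<open>0 < g a\<close> continuous_on_subset[OF cont, of "{a..t - s}"] t(1) by auto
  then have "z \<in> Z" using s t(1) by (auto simp: Z_def)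
  then have "t \<le> z" using first by (simp add: t_def)
  with \<open>z \<le> t - s\<close> \<open>0 < s\<close> show False by linarith
qed

section \<open>Local existence for y' = F t y (Picard-Lindeloef)\<close>

locale picard_box =
  fixes F :: "real \<Rightarrow> real \<Rightarrow> real" and a h y0 b M K :: real
  assumes h_pos: "0 < h" and b_nonneg: "0 \<le> b"
    and F_cont: "continuous_on ({a..a+h} \<times> {y0-b..y0+b}) (\<lambda>(t, y). F t y)"
    and F_bound: "\<And>t y. t \<in> {a..a+h} \<Longrightarrow> y \<in> {y0-b..y0+b} \<Longrightarrow> \<bar>F t y\<bar> \<le> M"
    and F_lipschitz: "\<And>t. t \<in> {a..a+h} \<Longrightarrow> K-lipschitz_on {y0-b..y0+b} (F t)"
    and M_h: "M * h \<le> b" and K_h: "K * h < 1"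
begin

definition box_funs :: "(real \<Rightarrow>\<^sub>C real) set" where
  "box_funs = PiC UNIV (\<lambda>_. {y0-b..y0+b})"

text \<open>Clamping the upper limit of integration to [a, a + h] makes every Picard iterate a bounded
  continuous function on the whole line, so the contraction argument runs in the complete space
  of bounded continuous functions.\<close>

definition picard_map :: "(real \<Rightarrow>\<^sub>C real) \<Rightarrow> real \<Rightarrow>\<^sub>C real" where
  "picard_map f = Bcontfun (\<lambda>x. y0 + integral {a..max a (min (a + h) x)} (\<lambda>s. F s (f s)))"

lemma mem_box_funs: "f \<in> box_funs \<longleftrightarrow> (\<forall>x. f x \<in> {y0-b..y0+b})"
  by (simp add: box_funs_def mem_PiC_iff Pi_def)

lemma integrand_continuous:
  assumes "f \<in> box_funs"
  shows "continuous_on {a..a+h} (\<lambda>s. F s (f s))"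
proof -
  have "continuous_on {a..a+h} ((\<lambda>(t, y). F t y) \<circ> (\<lambda>s. (s, f s)))"
    using assms by (intro continuous_on_compose continuous_intros continuous_on_subset[OF F_cont])
      (auto simp: mem_box_funs)
  then show ?thesis by (simp add: o_def)
qed

lemma integral_in_box:
  assumes "f \<in> box_funs" "c \<in> {a..a+h}"
  shows "\<bar>integral {a..c} (\<lambda>s. F s (f s))\<bar> \<le> b"
proof -
  have "norm (integral {a..c} (\<lambda>s. F s (f s))) \<le> M * (c - a)"
    using assms by (intro integral_bound continuous_on_subset[OF integrand_continuous[OF assms(1)]])
      (auto simp: mem_box_funs F_bound)
  also have "\<dots> \<le> M * h"
    using assms(2) F_bound[of a y0] h_pos b_nonneg by (intro mult_left_mono) auto
  finally show ?thesis using M_h by simp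
qed

lemma picard_map_apply:
  assumes "f \<in> box_funs"
  shows "picard_map f x = y0 + integral {a..max a (min (a + h) x)} (\<lambda>s. F s (f s))"
proof -
  let ?g = "\<lambda>x. y0 + integral {a..max a (min (a + h) x)} (\<lambda>s. F s (f s))"
  have "continuous_on {a..a+h} (\<lambda>c. integral {a..c} (\<lambda>s. F s (f s)))"
    by (intro indefinite_integral_continuous_1 integrable_continuous_real integrand_continuous assms)
  then have "continuous_on UNIV ((\<lambda>c. integral {a..c} (\<lambda>s. F s (f s))) \<circ> (\<lambda>x. max a (min (a + h) x)))"
    using h_pos by (intro continuous_on_compose continuous_intros) (auto elim: continuous_on_subset)
  then have "continuous_on UNIV ?g"
    by (auto simp: o_def intro!: continuous_intros)
  moreover have "norm (?g x) \<le> \<bar>y0\<bar> + b" for x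
    using integral_in_box[OF assms, of "max a (min (a + h) x)"] h_pos by auto
  ultimately have "?g \<in> bcontfun" by (rule bcontfun_normI)
  then show ?thesis by (simp add: picard_map_def Bcontfun_inverse)
qed

lemma picard_map_in_box_funs:
  assumes "f \<in> box_funs"
  shows "picard_map f \<in> box_funs"
  unfolding mem_box_funs
proof
  fix x
  have "\<bar>integral {a..max a (min (a + h) x)} (\<lambda>s. F s (f s))\<bar> \<le> b"
    using h_pos by (intro integral_in_box assms) auto
  then show "picard_map f x \<in> {y0-b..y0+b}"
    by (simp add: picard_map_apply[OF assms] abs_le_iff)
qed

lemma picard_map_contraction:
  assumes "f \<in> box_funs" "g \<in> box_funs"
  shows "dist (picard_map f) (picard_map g) \<le> (K * h) * dist f g"
proof (rule dist_bound)
  fix x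
  let ?c = "max a (min (a + h) x)"
  have K: "0 \<le> K" using F_lipschitz[of a] h_pos lipschitz_on_def by auto
  have "norm (integral {a..?c} (\<lambda>s. F s (f s) - F s (g s))) \<le> (K * dist f g) * (?c - a)"
  proof (intro integral_bound)
    show "continuous_on {a..?c} (\<lambda>s. F s (f s) - F s (g s))"
      using h_pos assms
      by (intro continuous_intros continuous_on_subset[OF integrand_continuous]) auto
    fix s assume "s \<in> {a..?c}"
    then have "s \<in> {a..a+h}" using h_pos by auto
    then have "dist (F s (f s)) (F s (g s)) \<le> K * dist (f s) (g s)"
      using assms by (intro lipschitz_onD[OF F_lipschitz]) (auto simp: mem_box_funs)
    also have "\<dots> \<le> K * dist f g" using K dist_bounded by (rule mult_left_mono[rotated])
    finally show "norm (F s (f s) - F s (g s)) \<le> K * dist f g" by (simp add: dist_real_def)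
  qed (use h_pos in auto)
  also have "\<dots> \<le> (K * dist f g) * h"
    using h_pos K by (intro mult_left_mono) auto
  finally have "norm (integral {a..?c} (\<lambda>s. F s (f s) - F s (g s))) \<le> (K * h) * dist f g"
    by (simp add: algebra_simps)
  moreover have "integral {a..?c} (\<lambda>s. F s (f s) - F s (g s))
      = integral {a..?c} (\<lambda>s. F s (f s)) - integral {a..?c} (\<lambda>s. F s (g s))"
    using h_pos assms by (intro integral_diff integrable_continuous_real
        continuous_on_subset[OF integrand_continuous]) auto
  ultimately show "dist (picard_map f x) (picard_map g x) \<le> (K * h) * dist f g"
    by (simp add: picard_map_apply assms dist_real_def)
qed

lemma solution_exists:
  obtains y where "y a = y0"
    "\<And>t. t \<in> {a..a+h} \<Longrightarrow>
       y t \<in> {y0-b..y0+b} \<and> (y has_real_derivative F t (y t)) (at t within {a..a+h})"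
proof -
  have "complete box_funs"
    unfolding complete_eq_closed box_funs_def by (rule closed_PiC) auto
  moreover have "const_bcontfun y0 \<in> box_funs"
    using b_nonneg by (simp add: mem_box_funs)
  moreover have "0 \<le> K * h"
    using F_lipschitz[of a] h_pos by (auto simp: lipschitz_on_def)
  ultimately obtain f where f: "f \<in> box_funs" "picard_map f = f"
    using Banach_fix[OF _ _ _ K_h _ picard_map_contraction] picard_map_in_box_funs by blast
  have f_eq: "f t = y0 + integral {a..t} (\<lambda>s. F s (f s))" if "t \<in> {a..a+h}" for t
    using picard_map_apply[OF f(1), of t] f(2) that by simp
  show thesis
  proof (rule that[of "apply_bcontfun f"])
    show "f a = y0" using f_eq[of a] h_pos by simp
    fix t assume t: "t \<in> {a..a+h}"
    have "((\<lambda>t. y0 + integral {a..t} (\<lambda>s. F s (f s))) has_real_derivative F t (f t)) (at t within {a..a+h})"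
      by (auto intro!: derivative_eq_intros integral_has_real_derivative integrand_continuous f t)
    then have "(f has_real_derivative F t (f t)) (at t within {a..a+h})"
      by (rule has_field_derivative_transform_within[where d=1]) (use t f_eq in auto)
    then show "f t \<in> {y0-b..y0+b} \<and> (f has_real_derivative F t (f t)) (at t within {a..a+h})"
      using f(1) by (simp add: mem_box_funs)
  qed
qed

end

lemma picard_local_existence:
  fixes F :: "real \<Rightarrow> real \<Rightarrow> real"
  assumes "0 < H" "0 < b"
    and cont: "continuous_on ({a..a+H} \<times> {y0-b..y0+b}) (\<lambda>(t, y). F t y)"
    and lip: "\<And>t. t \<in> {a..a+H} \<Longrightarrow> K-lipschitz_on {y0-b..y0+b} (F t)"
  obtains h y where "0 < h" "y a = y0"
    "\<And>t. t \<in> {a..a+h} \<Longrightarrow>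
       y t \<in> {y0-b..y0+b} \<and> (y has_real_derivative F t (y t)) (at t within {a..a+h})"
proof -
  have "compact ({a..a+H} \<times> {y0-b..y0+b})" by (intro compact_Times compact_Icc)
  then obtain M where M: "0 < M" "\<And>z. z \<in> {a..a+H} \<times> {y0-b..y0+b} \<Longrightarrow> \<bar>(\<lambda>(t, y). F t y) z\<bar> \<le> M"
    using compact_imp_bounded[OF compact_continuous_image[OF cont]] unfolding bounded_pos by auto
  have K: "0 \<le> K" using lip[of a] \<open>0 < H\<close> by (auto simp: lipschitz_on_def)
  define h where "h = min H (min (b / M) (1 / (K + 1)))"
  have h: "0 < h" "h \<le> H" "M * h \<le> b" "K * h < 1"
  proof -
    show "0 < h" "h \<le> H" using assms M K by (auto simp: h_def)
    have "M * h \<le> M * (b / M)" using M by (intro mult_left_mono) (auto simp: h_def)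
    then show "M * h \<le> b" using M by simp
    have "K * h \<le> K * (1 / (K + 1))" using K by (intro mult_left_mono) (auto simp: h_def)
    also have "\<dots> < 1" using K by (simp add: field_simps)
    finally show "K * h < 1" .
  qed
  interpret picard_box F a h y0 b M K
  proof
    show "continuous_on ({a..a+h} \<times> {y0-b..y0+b}) (\<lambda>(t, y). F t y)"
      using h by (auto intro: continuous_on_subset[OF cont])
  qed (use h M(2) lip assms in auto)
  from solution_exists h(1) that show thesis by blast
qed

lemma uniform_lipschitz_if_continuous_derivative:
  fixes F D :: "real \<Rightarrow> real \<Rightarrow> real"
  assumes "compact T"
    and cont: "continuous_on (T \<times> {c..d}) (\<lambda>(t, y). D t y)"
    and deriv: "\<And>t y. t \<in> T \<Longrightarrow> y \<in> {c..d} \<Longrightarrow> (F t has_real_derivative D t y) (at y within {c..d})"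
  obtains K where "\<And>t. t \<in> T \<Longrightarrow> K-lipschitz_on {c..d} (F t)"
proof -
  have "compact (T \<times> {c..d})" using assms(1) by (intro compact_Times compact_Icc)
  then obtain K where K: "0 < K" "\<And>z. z \<in> T \<times> {c..d} \<Longrightarrow> \<bar>(\<lambda>(t, y). D t y) z\<bar> \<le> K"
    using compact_imp_bounded[OF compact_continuous_image[OF cont]] unfolding bounded_pos by auto
  have "K-lipschitz_on {c..d} (F t)" if "t \<in> T" for t
  proof (rule lipschitz_onI)
    fix x y assume "x \<in> {c..d}" "y \<in> {c..d}"
    then show "dist (F t x) (F t y) \<le> K * dist x y"
      using field_differentiable_bound[of "{c..d}" "F t" "D t" K x y] deriv that K(2)
      by (auto simp: dist_real_def)
  qed (use K in auto)
  then show thesis by (rule that)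
qed

section \<open>The explicit form of the equation\<close>

definition ode_numer :: "real \<Rightarrow> real \<Rightarrow> real" where
  "ode_numer r y = r * (1 + 3 * y\<^sup>2) - 2 * y"

definition ode_rhs :: "real \<Rightarrow> real \<Rightarrow> real" where
  "ode_rhs r y = (1 + y\<^sup>2) * ode_numer r y / (2 * r * (1 - 3 * y\<^sup>2))"

lemma ode_expr_factor:
  "r * (1 + 4 * y\<^sup>2 + 3 * y ^ 4) - 2 * y * (1 + y\<^sup>2) + 2 * r * z * (3 * y\<^sup>2 - 1)
     = (1 + y\<^sup>2) * ode_numer r y - z * (2 * r * (1 - 3 * y\<^sup>2))"
  by (simp add: ode_numer_def algebra_simps power2_eq_square power4_eq_xxxx)

lemma ode_expr_eq_0_iff:
  assumes "r \<noteq> 0" "3 * y\<^sup>2 - 1 \<noteq> 0"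
  shows "r * (1 + 4 * y\<^sup>2 + 3 * y ^ 4) - 2 * y * (1 + y\<^sup>2) + 2 * r * z * (3 * y\<^sup>2 - 1) = 0
           \<longleftrightarrow> z = ode_rhs r y"
proof -
  have "2 * r * (1 - 3 * y\<^sup>2) \<noteq> 0" using assms by auto
  then show ?thesis
    unfolding ode_expr_factor ode_rhs_def by (auto simp: field_simps)
qed

lemma ode_rhs_local_solution:
  assumes "0 < \<rho>" "3 * L\<^sup>2 < 1"
  obtains h y where "0 < h" "y \<rho> = L"
    "\<And>t. t \<in> {\<rho>..\<rho>+h} \<Longrightarrow>
       3 * (y t)\<^sup>2 < 1 \<and> (y has_real_derivative ode_rhs t (y t)) (at t within {\<rho>..\<rho>+h})"
proof -
  have "open {y::real. 3 * y\<^sup>2 < 1}"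
    by (intro open_Collect_less continuous_intros)
  then obtain b where "0 < b" "cball L b \<subseteq> {y. 3 * y\<^sup>2 < 1}"
    using assms(2) open_contains_cball by blast
  then have box: "3 * y\<^sup>2 < 1" if "y \<in> {L-b..L+b}" for y
    using that by (auto simp: cball_eq_atLeastAtMost)
  let ?B = "{\<rho>..\<rho>+1} \<times> {L-b..L+b}"
  have nonzero: "2 * fst z * (1 - 3 * (snd z)\<^sup>2) \<noteq> 0" if "z \<in> ?B" for z
    using that assms(1) box[of "snd z"] by (auto simp: mem_Times_iff)
  have rhs_cont: "continuous_on ?B (\<lambda>(t, y). ode_rhs t y)"
    unfolding case_prod_unfold ode_rhs_def ode_numer_def
    by (intro continuous_intros) (use nonzero in auto)
  \<comment> \<open>the partial derivative of ode_rhs t y with respect to y\<close>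
  define D where "D t y = ((2 * y * ode_numer t y + (1 + y\<^sup>2) * (6 * t * y - 2)) * (2 * t * (1 - 3 * y\<^sup>2))
      + (1 + y\<^sup>2) * ode_numer t y * (12 * t * y)) / (2 * t * (1 - 3 * y\<^sup>2))\<^sup>2" for t y
  have "continuous_on ?B (\<lambda>(t, y). D t y)"
    unfolding case_prod_unfold D_def ode_numer_def
    by (intro continuous_intros) (use nonzero in auto)
  moreover have "(ode_rhs t has_real_derivative D t y) (at y within {L-b..L+b})"
    if "t \<in> {\<rho>..\<rho>+1}" "y \<in> {L-b..L+b}" for t y
  proof -
    have "2 * t * (1 - 3 * y\<^sup>2) \<noteq> 0" using nonzero[of "(t, y)"] that by simp
    then show ?thesis
      unfolding ode_rhs_def[abs_def] ode_numer_def D_def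
      by (auto intro!: derivative_eq_intros simp: power2_eq_square algebra_simps)
  qed
  ultimately obtain K where "\<And>t. t \<in> {\<rho>..\<rho>+1} \<Longrightarrow> K-lipschitz_on {L-b..L+b} (ode_rhs t)"
    using uniform_lipschitz_if_continuous_derivative[of "{\<rho>..\<rho>+1}"] by blast
  with picard_local_existence[OF zero_less_one \<open>0 < b\<close> rhs_cont]
  obtain h y where "0 < h" "y \<rho> = L"
    "\<And>t. t \<in> {\<rho>..\<rho>+h} \<Longrightarrow>
       y t \<in> {L-b..L+b} \<and> (y has_real_derivative ode_rhs t (y t)) (at t within {\<rho>..\<rho>+h})"
    by blast
  with box show thesis using that by blast
qed

section \<open>Solutions on [0, R)\<close>

lemma zero_in_dom0_iff: "0 \<in> dom0 R \<longleftrightarrow> 0 < R"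
  by (simp add: dom0_def zero_ereal_def)

lemma dom0_ereal: "dom0 (ereal \<rho>) = {0..<\<rho>}"
  by (auto simp: dom0_def)

lemma dom0_infinity: "dom0 \<infinity> = {0..}"
  by (auto simp: dom0_def)

lemma atLeastAtMost_subset_dom0: "x \<in> dom0 R \<Longrightarrow> {0..x} \<subseteq> dom0 R"
  by (auto simp: dom0_def intro: order.strict_trans1[rotated])

lemma at_within_dom0:
  assumes "0 < x" "x \<in> dom0 R"
  shows "at x within dom0 R = at x"
proof -
  obtain c where c: "x < c" "ereal c < R"
    using assms(2) ereal_dense2 by (force simp: dom0_def)
  have "at x within dom0 R = at x within UNIV"
    by (rule at_within_nhd[of x "{0<..<c}"])
      (use assms c in \<open>auto simp: dom0_def intro: order.strict_trans[rotated]\<close>)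
  then show ?thesis by simp
qed

lemma at_0_within_dom0:
  assumes "0 < R"
  shows "at 0 within dom0 R = at_right 0"
proof -
  obtain c where c: "0 < c" "ereal c < R"
    using assms ereal_dense2 by (force simp: zero_ereal_def)
  have "at 0 within dom0 R = at 0 within {0<..}"
    by (rule at_within_nhd[of 0 "{..<c}"])
      (use c in \<open>auto simp: dom0_def intro: order.strict_trans[rotated]\<close>)
  then show ?thesis by simp
qed

lemma eventually_in_dom0_at_right_0:
  assumes "0 < R"
  shows "eventually (\<lambda>r. r \<in> dom0 R) (at_right 0)"
proof -
  obtain c where c: "0 < c" "ereal c < R"
    using assms ereal_dense2 by (force simp: zero_ereal_def)
  show ?thesis
    using eventually_at_right_real[OF c(1)]
    by eventually_elim (use c in \<open>auto simp: dom0_def intro: order.strict_trans[rotated]\<close>)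
qed

locale ode_solution =
  fixes u p q :: "real \<Rightarrow> real" and R :: ereal
  assumes R_pos: "0 < R"
    and derivatives: "\<And>r. r \<in> dom0 R \<Longrightarrow> (u has_real_derivative p r) (at r within dom0 R)
                                    \<and> (p has_real_derivative q r) (at r within dom0 R)"
    and q_continuous: "continuous_on (dom0 R) q"
    and u_0: "u 0 = 0" and p_0: "p 0 = 0"
    and nondegenerate: "\<And>r. r \<in> dom0 R \<Longrightarrow> 3 * (p r)\<^sup>2 - 1 \<noteq> 0"
    and equation: "\<And>r. r \<in> dom0 R \<Longrightarrow>
          r * (1 + 4 * (p r)\<^sup>2 + 3 * (p r) ^ 4) - 2 * p r * (1 + (p r)\<^sup>2)
          + 2 * r * q r * (3 * (p r)\<^sup>2 - 1) = 0"

lemma ode_sol_iff_ode_solution: "ode_sol u R \<longleftrightarrow> (\<exists>p q. ode_solution u p q R)"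
  by (simp add: ode_sol_def ode_solution_def zero_in_dom0_iff) blast

lemma ode_solution_explicitI:
  assumes "0 < R"
    and "\<And>r. r \<in> dom0 R \<Longrightarrow> (u has_real_derivative p r) (at r within dom0 R)
                           \<and> (p has_real_derivative q r) (at r within dom0 R)"
    and "continuous_on (dom0 R) q" and "u 0 = 0" and "p 0 = 0"
    and nondegenerate: "\<And>r. r \<in> dom0 R \<Longrightarrow> 3 * (p r)\<^sup>2 \<noteq> 1"
    and explicit: "\<And>r. 0 < r \<Longrightarrow> r \<in> dom0 R \<Longrightarrow> q r = ode_rhs r (p r)"
  shows "ode_solution u p q R"
proof
  fix r assume r: "r \<in> dom0 R"
  show "3 * (p r)\<^sup>2 - 1 \<noteq> 0" using nondegenerate[OF r] by simp
  show "r * (1 + 4 * (p r)\<^sup>2 + 3 * p r ^ 4) - 2 * p r * (1 + (p r)\<^sup>2) + 2 * r * q r * (3 * (p r)\<^sup>2 - 1) = 0"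
  proof (cases "r = 0")
    case True then show ?thesis using \<open>p 0 = 0\<close> by simp
  next
    case False
    then have "0 < r" using r by (simp add: dom0_def)
    with r nondegenerate[OF r] explicit[OF \<open>0 < r\<close> r] show ?thesis
      by (subst ode_expr_eq_0_iff) auto
  qed
qed (use assms in auto)

lemma ode_solution_integral_slope:
  assumes "0 < \<rho>" "P 0 = 0"
    and P_deriv: "\<And>x. x \<in> {0..\<rho>} \<Longrightarrow> (P has_real_derivative V x) (at x within {0..\<rho>})"
    and "continuous_on {0..\<rho>} V"
    and "\<And>r. r \<in> {0..<\<rho>} \<Longrightarrow> 3 * (P r)\<^sup>2 \<noteq> 1"
    and "\<And>r. 0 < r \<Longrightarrow> r < \<rho> \<Longrightarrow> V r = ode_rhs r (P r)"
  shows "ode_solution (\<lambda>r. integral {0..r} P) P V (ereal \<rho>)"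
proof (rule ode_solution_explicitI)
  fix r assume "r \<in> dom0 (ereal \<rho>)"
  then have r: "r \<in> {0..\<rho>}" by (simp add: dom0_ereal)
  have "continuous_on {0..\<rho>} P" using P_deriv by (rule DERIV_continuous_on)
  then have "((\<lambda>r. integral {0..r} P) has_real_derivative P r) (at r within {0..\<rho>})"
    using r by (rule integral_has_real_derivative)
  with P_deriv[OF r] show "((\<lambda>r. integral {0..r} P) has_real_derivative P r) (at r within dom0 (ereal \<rho>))
      \<and> (P has_real_derivative V r) (at r within dom0 (ereal \<rho>))"
    by (auto simp: dom0_ereal intro: has_field_derivative_subset)
qed (use assms in \<open>auto simp: dom0_ereal intro: continuous_on_subset\<close>)

context ode_solution
begin

lemma p_continuous: "continuous_on (dom0 R) p"
  using derivatives by (blast intro: DERIV_continuous_on)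

lemma derivatives_at:
  assumes "0 < r" "r \<in> dom0 R"
  shows "(u has_real_derivative p r) (at r)" "(p has_real_derivative q r) (at r)"
  using derivatives[OF assms(2)] at_within_dom0[OF assms] by auto

lemma slope_sq_less:
  assumes "x \<in> dom0 R"
  shows "3 * (p x)\<^sup>2 < 1"
proof (rule ccontr)
  assume "\<not> 3 * (p x)\<^sup>2 < 1"
  moreover have "continuous_on {0..x} (\<lambda>r. 3 * (p r)\<^sup>2 - 1)"
    by (intro continuous_intros continuous_on_subset[OF p_continuous] atLeastAtMost_subset_dom0 assms)
  ultimately obtain z where "0 \<le> z" "z \<le> x" "3 * (p z)\<^sup>2 - 1 = 0"
    using IVT'[of "\<lambda>r. 3 * (p r)\<^sup>2 - 1" 0 0 x] assms p_0 by (auto simp: dom0_def)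
  moreover have "z \<in> dom0 R" using atLeastAtMost_subset_dom0[OF assms] \<open>0 \<le> z\<close> \<open>z \<le> x\<close> by auto
  ultimately show False using nondegenerate by blast
qed

lemma abs_slope_less_1: "x \<in> dom0 R \<Longrightarrow> \<bar>p x\<bar> < 1"
  using slope_sq_less[of x] abs_square_less_1[of "p x"] zero_le_power2[of "p x"] by linarith

lemma equation_factored:
  "r \<in> dom0 R \<Longrightarrow> q r * (2 * r * (1 - 3 * (p r)\<^sup>2)) = (1 + (p r)\<^sup>2) * ode_numer r (p r)"
  using equation[of r] by (simp add: ode_expr_factor)

lemma q_eq_ode_rhs: "0 < r \<Longrightarrow> r \<in> dom0 R \<Longrightarrow> q r = ode_rhs r (p r)"
  using equation[of r] nondegenerate[of r] ode_expr_eq_0_iff by auto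

lemma slope_quotient_tendsto: "((\<lambda>r. p r / r) \<longlongrightarrow> q 0) (at_right 0)"
proof -
  have "(p has_real_derivative q 0) (at_right 0)"
    using derivatives[of 0] at_0_within_dom0[OF R_pos] R_pos by (simp add: zero_in_dom0_iff[symmetric])
  then show ?thesis by (simp add: has_field_derivative_iff p_0)
qed

lemma p_tendsto_0: "(p \<longlongrightarrow> 0) (at_right 0)" and q_tendsto_q_0: "(q \<longlongrightarrow> q 0) (at_right 0)"
  using p_continuous q_continuous R_pos p_0 at_0_within_dom0[OF R_pos]
  by (auto simp: continuous_on_def zero_in_dom0_iff[symmetric])

lemma q_0: "q 0 = 1 / 4"
proof -
  have "eventually (\<lambda>r. (1 + (p r)\<^sup>2) * (1 + 3 * (p r)\<^sup>2 - 2 * (p r / r))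
      = q r * (2 * (1 - 3 * (p r)\<^sup>2))) (at_right 0)"
    using eventually_in_dom0_at_right_0[OF R_pos] eventually_at_right_less[of 0]
  proof eventually_elim
    case (elim r)
    from equation_factored[OF elim(1)] elim(2) show ?case
      by (simp add: ode_numer_def field_simps)
  qed
  moreover have "((\<lambda>r. (1 + (p r)\<^sup>2) * (1 + 3 * (p r)\<^sup>2 - 2 * (p r / r)))
      \<longlongrightarrow> (1 + 0\<^sup>2) * (1 + 3 * 0\<^sup>2 - 2 * q 0)) (at_right 0)"
    by (intro tendsto_intros slope_quotient_tendsto p_tendsto_0)
  ultimately have "((\<lambda>r. q r * (2 * (1 - 3 * (p r)\<^sup>2))) \<longlongrightarrow> (1 + 0\<^sup>2) * (1 + 3 * 0\<^sup>2 - 2 * q 0)) (at_right 0)"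
    by (rule Lim_transform_eventually[rotated])
  moreover have "((\<lambda>r. q r * (2 * (1 - 3 * (p r)\<^sup>2))) \<longlongrightarrow> q 0 * (2 * (1 - 3 * 0\<^sup>2))) (at_right 0)"
    by (intro tendsto_intros q_tendsto_q_0 p_tendsto_0)
  ultimately have "(1 + 0\<^sup>2) * (1 + 3 * 0\<^sup>2 - 2 * q 0) = q 0 * (2 * (1 - 3 * (0::real)\<^sup>2))"
    by (rule tendsto_unique[OF trivial_limit_at_right_real])
  then show ?thesis by simp
qed

lemma ode_numer_eventually_pos: "eventually (\<lambda>r. 0 < ode_numer r (p r)) (at_right 0)"
proof -
  have "((\<lambda>r. 1 + 3 * (p r)\<^sup>2 - 2 * (p r / r)) \<longlongrightarrow> 1 + 3 * 0\<^sup>2 - 2 * q 0) (at_right 0)"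
    by (intro tendsto_intros slope_quotient_tendsto p_tendsto_0)
  then have "eventually (\<lambda>r. 0 < 1 + 3 * (p r)\<^sup>2 - 2 * (p r / r)) (at_right 0)"
    using q_0 by (intro order_tendstoD(1)) auto
  with eventually_at_right_less[of 0] show ?thesis
  proof eventually_elim
    case (elim r)
    then have "0 < r * (1 + 3 * (p r)\<^sup>2 - 2 * (p r / r))" by simp
    then show ?case using elim by (simp add: ode_numer_def algebra_simps)
  qed
qed

lemma ode_numer_has_derivative:
  assumes "0 < t" "t \<in> dom0 R"
  shows "((\<lambda>r. ode_numer r (p r)) has_real_derivative 1 + 3 * (p t)\<^sup>2 + (6 * t * p t - 2) * q t) (at t)"
  unfolding ode_numer_def using derivatives_at[OF assms]
  by (auto intro!: derivative_eq_intros simp: algebra_simps power2_eq_square)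

lemma ode_numer_pos:
  assumes "0 < x" "x \<in> dom0 R"
  shows "0 < ode_numer x (p x)"
proof -
  obtain b where b: "0 < b" "\<And>y. 0 < y \<Longrightarrow> y < b \<Longrightarrow> 0 < ode_numer y (p y)"
    using ode_numer_eventually_pos by (auto simp: eventually_at_right_field)
  define a where "a = min (b / 2) (x / 2)"
  have "a \<le> b / 2" "a \<le> x / 2" "0 < a"
    using b(1) assms(1) by (simp_all add: a_def)
  with b have a: "0 < a" "a < x" "0 < ode_numer a (p a)"
    using assms(1) by auto
  have "{a..x} \<subseteq> dom0 R" using atLeastAtMost_subset_dom0[OF assms(2)] a by auto
  show ?thesis
  proof (rule pos_if_deriv_pos_at_zeros[of a x "\<lambda>r. ode_numer r (p r)"])
    show "continuous_on {a..x} (\<lambda>r. ode_numer r (p r))"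
      unfolding ode_numer_def
      by (intro continuous_intros continuous_on_subset[OF p_continuous \<open>{a..x} \<subseteq> dom0 R\<close>])
    fix t assume t: "t \<in> {a<..x}" "ode_numer t (p t) = 0"
    then have "0 < t" "t \<in> dom0 R" using a \<open>{a..x} \<subseteq> dom0 R\<close> by auto
    have "q t * (2 * t * (1 - 3 * (p t)\<^sup>2)) = 0"
      using equation_factored[OF \<open>t \<in> dom0 R\<close>] t(2) by simp
    then have "q t = 0" using \<open>0 < t\<close> slope_sq_less[OF \<open>t \<in> dom0 R\<close>] by simp
    moreover have "0 < 1 + 3 * (p t)\<^sup>2" by (simp add: add_pos_nonneg)
    ultimately show "\<exists>d>0. ((\<lambda>r. ode_numer r (p r)) has_real_derivative d) (at t)"
      using ode_numer_has_derivative[OF \<open>0 < t\<close> \<open>t \<in> dom0 R\<close>] by auto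
  qed (use a in auto)
qed

lemma q_pos:
  assumes "0 < x" "x \<in> dom0 R"
  shows "0 < q x"
proof -
  have "0 < (1 + (p x)\<^sup>2) * ode_numer x (p x)"
    using ode_numer_pos[OF assms] by (simp add: add_pos_nonneg)
  moreover have "0 < 2 * x * (1 - 3 * (p x)\<^sup>2)"
    using slope_sq_less[OF assms(2)] assms(1) by simp
  ultimately show ?thesis
    unfolding q_eq_ode_rhs[OF assms] ode_rhs_def by (rule divide_pos_pos)
qed

lemma p_mono:
  assumes "0 \<le> x" "x \<le> y" "y \<in> dom0 R"
  shows "p x \<le> p y"
proof (rule DERIV_nonneg_imp_increasing_open[OF assms(2)])
  fix z assume "x < z" "z < y"
  then have "0 < z" "z \<in> dom0 R" using assms atLeastAtMost_subset_dom0[OF assms(3)] by auto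
  then show "\<exists>d. (p has_real_derivative d) (at z) \<and> 0 \<le> d"
    using derivatives_at q_pos less_imp_le by blast
next
  show "continuous_on {x..y} p"
    using assms atLeastAtMost_subset_dom0[OF assms(3)] by (intro continuous_on_subset[OF p_continuous]) auto
qed

lemma R_finite: "R \<noteq> \<infinity>"
proof
  assume "R = \<infinity>"
  then have dom: "x \<in> dom0 R" if "0 \<le> x" for x using that by (simp add: dom0_infinity)
  have q_ge: "1 / 4 \<le> q x" if "4 \<le> x" for x
  proof -
    have x: "0 < x" "x \<in> dom0 R" using that dom by auto
    have "x \<le> x * (1 + 3 * (p x)\<^sup>2)" using x(1) by simp
    then have "x / 2 \<le> ode_numer x (p x)"
      using abs_slope_less_1[OF x(2)] that unfolding ode_numer_def by linarith
    also have "\<dots> \<le> (1 + (p x)\<^sup>2) * ode_numer x (p x)"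
      using ode_numer_pos[OF x] by simp
    also have "\<dots> = q x * (2 * x * (1 - 3 * (p x)\<^sup>2))"
      using equation_factored[OF x(2)] by simp
    also have "\<dots> \<le> q x * (2 * x)"
      using q_pos[OF x] x(1) by (intro mult_left_mono) auto
    finally show ?thesis using x(1) by (simp add: field_simps)
  qed
  obtain z where "4 < z" "z < 8" "p 8 - p 4 = (8 - 4) * q z"
    using MVT2[of 4 8 p q] derivatives_at dom by fastforce
  moreover have "0 \<le> p 4" using p_mono[of 0 4] p_0 dom by simp
  ultimately have "1 \<le> p 8" using q_ge[of z] by simp
  then show False using abs_slope_less_1[OF dom[of 8]] by simp
qed

lemma p_tendsto_end:
  assumes "R = ereal \<rho>"
  obtains L where "(p \<longlongrightarrow> L) (at_left \<rho>)" "0 \<le> L" "3 * L\<^sup>2 \<le> 1"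
proof
  have "0 < \<rho>" using R_pos assms by (simp add: zero_ereal_def)
  have dom: "dom0 R = {0..<\<rho>}" using assms by (simp add: dom0_ereal)
  define L where "L = Sup (p ` ({..<\<rho>} \<inter> {0..}))"
  have "(p \<longlongrightarrow> L) (at \<rho> within ({..<\<rho>} \<inter> {0..}))"
    unfolding L_def
  proof (rule Lim_left_bound)
    show "p a \<le> p b" if "a \<in> {0..}" "b \<in> {0..}" "b < \<rho>" "a \<le> b" for a b
      using that by (intro p_mono) (auto simp: dom)
    show "p b \<le> 1" if "b \<in> {0..}" "b < \<rho>" for b
      using abs_slope_less_1[of b] that by (simp add: dom)
  qed
  moreover have "at \<rho> within ({..<\<rho>} \<inter> {0..}) = at_left \<rho>"
    by (rule at_within_nhd[of _ "{0<..}"]) (use \<open>0 < \<rho>\<close> in auto)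
  ultimately show p_lim: "(p \<longlongrightarrow> L) (at_left \<rho>)" by simp
  have ev: "eventually (\<lambda>r. r \<in> dom0 R) (at_left \<rho>)"
    using eventually_at_left_real[OF \<open>0 < \<rho>\<close>] by eventually_elim (simp add: dom)
  show "0 \<le> L"
  proof (rule tendsto_lowerbound[OF p_lim])
    show "eventually (\<lambda>r. 0 \<le> p r) (at_left \<rho>)"
      using ev by eventually_elim (use p_mono[of 0] p_0 in \<open>auto simp: dom\<close>)
  qed (simp add: trivial_limit_at_left_real)
  show "3 * L\<^sup>2 \<le> 1"
  proof (rule tendsto_upperbound)
    show "((\<lambda>r. 3 * (p r)\<^sup>2) \<longlongrightarrow> 3 * L\<^sup>2) (at_left \<rho>)" by (intro tendsto_intros p_lim)
    show "eventually (\<lambda>r. 3 * (p r)\<^sup>2 \<le> 1) (at_left \<rho>)"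
      using ev by eventually_elim (simp add: slope_sq_less less_imp_le)
  qed (simp add: trivial_limit_at_left_real)
qed

lemma q_tendsto_end:
  assumes "R = ereal \<rho>" "(p \<longlongrightarrow> L) (at_left \<rho>)" "3 * L\<^sup>2 < 1"
  shows "(q \<longlongrightarrow> ode_rhs \<rho> L) (at_left \<rho>)"
proof -
  have "0 < \<rho>" using R_pos assms(1) by (simp add: zero_ereal_def)
  have "((\<lambda>r. ode_rhs r (p r)) \<longlongrightarrow> ode_rhs \<rho> L) (at_left \<rho>)"
    unfolding ode_rhs_def ode_numer_def
    using \<open>0 < \<rho>\<close> assms(3) by (intro tendsto_intros assms(2)) auto
  moreover have "eventually (\<lambda>r. ode_rhs r (p r) = q r) (at_left \<rho>)"
    using eventually_at_left_real[OF \<open>0 < \<rho>\<close>]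
    by eventually_elim (simp add: q_eq_ode_rhs assms(1) dom0_ereal)
  ultimately show ?thesis by (rule Lim_transform_eventually)
qed

lemma slope_extends_past_end:
  assumes R: "R = ereal \<rho>" and p_lim: "(p \<longlongrightarrow> L) (at_left \<rho>)" and "3 * L\<^sup>2 < 1"
  obtains h P V where "0 < h" "\<And>r. r \<in> {0..<\<rho>} \<Longrightarrow> P r = p r"
    "\<And>x. x \<in> {0..\<rho>+h} \<Longrightarrow> (P has_real_derivative V x) (at x within {0..\<rho>+h})"
    "continuous_on {0..\<rho>+h} V" "\<And>r. r \<in> {0..<\<rho>+h} \<Longrightarrow> 3 * (P r)\<^sup>2 \<noteq> 1"
    "\<And>r. 0 < r \<Longrightarrow> r < \<rho> + h \<Longrightarrow> V r = ode_rhs r (P r)"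
proof -
  have "0 < \<rho>" using R_pos R by (simp add: zero_ereal_def)
  have dom: "dom0 R = {0..<\<rho>}" using R by (simp add: dom0_ereal)
  obtain h y where "0 < h" "y \<rho> = L" and y:
    "\<And>t. t \<in> {\<rho>..\<rho>+h} \<Longrightarrow>
       3 * (y t)\<^sup>2 < 1 \<and> (y has_real_derivative ode_rhs t (y t)) (at t within {\<rho>..\<rho>+h})"
    using ode_rhs_local_solution[OF \<open>0 < \<rho>\<close> \<open>3 * L\<^sup>2 < 1\<close>] by blast
  have p_deriv: "(p has_real_derivative q x) (at x within {0..<\<rho>})" if "x \<in> {0..<\<rho>}" for x
    using derivatives[of x] that by (simp add: dom)
  have y_deriv: "(y has_real_derivative ode_rhs x (y x)) (at x within {\<rho>..\<rho>+h})"
    if "x \<in> {\<rho>..\<rho>+h}" for x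
    using y[OF that] by simp
  have "continuous_on {\<rho>..\<rho>+h} y"
    using y_deriv by (rule DERIV_continuous_on)
  moreover have "2 * t * (1 - 3 * (y t)\<^sup>2) \<noteq> 0" if "t \<in> {\<rho>..\<rho>+h}" for t
    using y[OF that] that \<open>0 < \<rho>\<close> by auto
  ultimately have rhs_cont: "continuous_on {\<rho>..\<rho>+h} (\<lambda>t. ode_rhs t (y t))"
    unfolding ode_rhs_def ode_numer_def by (intro continuous_intros) auto
  have "\<rho> \<le> \<rho> + h" using \<open>0 < h\<close> by simp
  define P where "P = (\<lambda>r. if r < \<rho> then p r else y r)"
  define V where "V = (\<lambda>r. if r < \<rho> then q r else ode_rhs r (y r))"
  have "continuous_on {0..\<rho>+h} V"
    and "\<And>x. x \<in> {0..\<rho>+h} \<Longrightarrow> (P has_real_derivative V x) (at x within {0..\<rho>+h})"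
    unfolding P_def V_def
    using continuously_differentiable_glue[OF \<open>0 < \<rho>\<close> \<open>\<rho> \<le> \<rho> + h\<close> p_deriv
        q_continuous[unfolded dom] y_deriv rhs_cont p_lim[folded \<open>y \<rho> = L\<close>]
        q_tendsto_end[OF R p_lim \<open>3 * L\<^sup>2 < 1\<close>, folded \<open>y \<rho> = L\<close>]]
    by simp_all
  moreover have "3 * (P r)\<^sup>2 \<noteq> 1" if "r \<in> {0..<\<rho>+h}" for r
    using slope_sq_less[of r] y[of r] that by (auto simp: P_def dom)
  moreover have "V r = ode_rhs r (P r)" if "0 < r" "r < \<rho> + h" for r
    using q_eq_ode_rhs[of r] that by (auto simp: P_def V_def dom)
  ultimately show thesis
    using that[of h P V] \<open>0 < h\<close> by (auto simp: P_def)
qed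

lemma extends_past_end:
  assumes "R = ereal \<rho>" "(p \<longlongrightarrow> L) (at_left \<rho>)" "3 * L\<^sup>2 < 1"
  obtains v \<rho>' where "\<rho> < \<rho>'" "ode_sol v (ereal \<rho>')" "\<forall>r\<in>dom0 R. v r = u r"
proof -
  obtain h P V where "0 < h" and P_p: "\<And>r. r \<in> {0..<\<rho>} \<Longrightarrow> P r = p r"
    and "\<And>x. x \<in> {0..\<rho>+h} \<Longrightarrow> (P has_real_derivative V x) (at x within {0..\<rho>+h})"
    "continuous_on {0..\<rho>+h} V" "\<And>r. r \<in> {0..<\<rho>+h} \<Longrightarrow> 3 * (P r)\<^sup>2 \<noteq> 1"
    "\<And>r. 0 < r \<Longrightarrow> r < \<rho> + h \<Longrightarrow> V r = ode_rhs r (P r)"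
    using slope_extends_past_end[OF assms] by blast
  moreover have "0 < \<rho>" using R_pos assms(1) by (simp add: zero_ereal_def)
  ultimately have "ode_solution (\<lambda>r. integral {0..r} P) P V (ereal (\<rho> + h))"
    using p_0 by (intro ode_solution_integral_slope) auto
  moreover have "integral {0..r} P = u r" if r: "r \<in> dom0 R" for r
  proof -
    have "integral {0..r} P = integral {0..r} p"
      using r assms(1) by (intro integral_cong) (auto simp: P_p dom0_ereal)
    also have "\<dots> = u r - u 0"
      using r atLeastAtMost_subset_dom0[OF r] derivatives
      by (intro integral_eq_diff_if_has_real_derivative[where f=u and S="dom0 R"]) (auto simp: dom0_def)
    finally show ?thesis by (simp add: u_0)
  qed
  ultimately show thesis
    using that[of "\<rho> + h" "\<lambda>r. integral {0..r} P"] \<open>0 < h\<close> by (auto simp: ode_sol_iff_ode_solution)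
qed

lemma slope_tendsto_at_maximal_end:
  assumes R: "R = ereal \<rho>"
    and maximal: "\<not> (\<exists>v R'. R < R' \<and> ode_sol v R' \<and> (\<forall>r\<in>dom0 R. v r = u r))"
  shows "(p \<longlongrightarrow> 1 / sqrt 3) (at_left \<rho>)"
proof -
  obtain L where p_lim: "(p \<longlongrightarrow> L) (at_left \<rho>)" and "0 \<le> L" "3 * L\<^sup>2 \<le> 1"
    using p_tendsto_end[OF R] by blast
  have "3 * L\<^sup>2 = 1"
  proof (rule ccontr)
    assume "3 * L\<^sup>2 \<noteq> 1"
    with \<open>3 * L\<^sup>2 \<le> 1\<close> have "3 * L\<^sup>2 < 1" by simp
    then obtain v \<rho>' where "\<rho> < \<rho>'" "ode_sol v (ereal \<rho>')" "\<forall>r\<in>dom0 R. v r = u r"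
      by (rule extends_past_end[OF R p_lim])
    moreover have "R < ereal \<rho>'" using R \<open>\<rho> < \<rho>'\<close> by simp
    ultimately show False using maximal by blast
  qed
  with \<open>0 \<le> L\<close> have "sqrt (1 / 3) = L"
    by (intro real_sqrt_unique) auto
  with p_lim show ?thesis by (simp add: real_sqrt_divide)
qed

end

theorem theorem2:
  fixes u :: "real \<Rightarrow> real" and R :: ereal
  assumes "maximal_ode_sol u R"
  shows "0 < R \<and> R < \<infinity> \<and>
         (deriv u \<longlongrightarrow> 1 / sqrt 3) (at_left (real_of_ereal R))"
proof -
  from assms have "ode_sol u R"
    and maximal: "\<not> (\<exists>v R'. R < R' \<and> ode_sol v R' \<and> (\<forall>r\<in>dom0 R. v r = u r))"
    unfolding maximal_ode_sol_def by blast+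
  then obtain p q where "ode_solution u p q R"
    unfolding ode_sol_iff_ode_solution by blast
  then interpret ode_solution u p q R .
  obtain \<rho> where R: "R = ereal \<rho>" using R_pos R_finite by (cases R) auto
  then have "0 < \<rho>" using R_pos by (simp add: zero_ereal_def)
  have "eventually (\<lambda>r. p r = deriv u r) (at_left \<rho>)"
    using eventually_at_left_real[OF \<open>0 < \<rho>\<close>]
  proof eventually_elim
    case (elim r)
    then show ?case using derivatives_at(1)[of r] by (simp add: R dom0_ereal DERIV_imp_deriv)
  qed
  with slope_tendsto_at_maximal_end[OF R maximal]
  have "(deriv u \<longlongrightarrow> 1 / sqrt 3) (at_left \<rho>)" by (rule Lim_transform_eventually)
  then show ?thesis using R R_pos R_finite by simp
qed

end
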